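(* Let $n,m\geq1$. Let $\bm{p}_{j}=(p_{1j},\ldots,p_{nj})^{T}\in\mathbb{R}^{n}$ for $j=1,\ldots,m$, let $w_{j}>0$ and $d_{j}>0$ and $h_{j}\in\mathbb{R}$ for $j=1,\ldots,m$, let $b_{ik}\in\mathbb{R}\cup\{-\infty\}$ for $i,k=1,\ldots,n$, and let $f_{i}\leq g_{i}$ be reals for $i=1,\ldots,n$. Consider the problem of minimizing over $\bm{x}=(x_{1},\ldots,x_{n})^{T}\in\mathbb{R}^{n}$ $$\max_{1\leq j\leq m}\Big(w_{j}\max_{1\leq i\leq n}|x_{i}-p_{ij}|+h_{j}\Big)$$ subject to $\max_{1\leq i\leq n}|x_{i}-p_{ij}|\leq d_{j}$ for $j=1,\ldots,m$, $b_{ik}+x_{k}\leq x_{i}$ for $i,k=1,\ldots,n$, and $f_{i}\leq x_{i}\leq g_{i}$ for $i=1,\ldots,n$. Suppose that 1. $\max_{1\leq i_{1},\ldots,i_{k-1}\leq n,\ i_{0}=i_{k}=i}(b_{i_{0}i_{1}}+\cdots+b_{i_{k-1}i_{k}})\leq0$ for all $i,k=1,\ldots,n$; 2. $b_{ik}^{\ast}+\max\{\max_{1\leq l\leq m}(p_{kl}-d_{l}),f_{k}\}\leq\min\{\min_{1\leq j\leq m}(p_{ij}+d_{j}),g_{i}\}$ for all $i,k=1,\ldots,n$. Then the minimum value of the problem is $$\theta=\max_{1\leq i,k\leq n}\max_{1\leq j,l\leq m}\max\Bigg\{\frac{w_{l}h_{j}}{w_{j}+w_{l}}+\frac{w_{j}h_{l}}{w_{j}+w_{l}}+\frac{w_{j}w_{l}}{w_{j}+w_{l}}(b_{ik}^{\ast}-p_{ij}+p_{kl}),\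 h_{j}+w_{j}\big(b_{ik}^{\ast}-p_{ij}+\max\{p_{kl}-d_{l},f_{k}\}\big),\ h_{l}+w_{l}\big(b_{ik}^{\ast}-\min\{p_{ij}+d_{j},g_{i}\}+p_{kl}\big)\Bigg\},$$ and all solution vectors $\bm{x}=(x_{i})$ are given by $x_{i}=\max_{1\leq k\leq n}(b_{ik}^{\ast}+u_{k})$, $i=1,\ldots,n$, where the parameter vector $\bm{u}=(u_{k})$ satisfies, for each $k=1,\ldots,n$, $$\max_{1\leq j\leq m}\max\left\{\frac{h_{j}-\theta}{w_{j}}+p_{kj},\ p_{kj}-d_{j},\ f_{k}\right\}\leq u_{k}\leq\min_{1\leq i\leq n}\min_{1\leq j\leq m}\left(\min\left\{\frac{\theta-h_{j}}{w_{j}}+p_{ij},\ p_{ij}+d_{j},\ g_{i}\right\}-b_{ik}^{\ast}\right).$$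
   Context: Conventions: $-\infty+a=-\infty$ for any $a$, and $a-(-\infty)=+\infty$ for real $a$. For $i,k=1,\ldots,n$ define $$\beta_{ik}=\max_{1\leq l\leq n-1}\ \max_{1\leq i_{1},\ldots,i_{l-1}\leq n,\ i_{0}=i,\ i_{l}=k}(b_{i_{0}i_{1}}+\cdots+b_{i_{l-1}i_{l}})$$ (maximum over all index sequences of length $l$ from $i$ to $k$; an empty maximum is $-\infty$), and set $b_{ik}^{\ast}=\beta_{ik}$ if $i\neq k$ and $b_{ii}^{\ast}=\max\{\beta_{ii},0\}$. *)

theory Defs
  imports Complex_Main "HOL-Library.Extended_Real"
begin

text \<open>Vectors are functions nat => real (only indices in range matter).
 Entries b i k are in ereal (meant in real or -infinity); ereal arithmetic realises the conventions
 -inf + a = -inf and a - (-inf) = +inf.\<close>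

fun walk_weight :: "(nat \<Rightarrow> nat \<Rightarrow> ereal) \<Rightarrow> nat \<Rightarrow> nat list \<Rightarrow> nat \<Rightarrow> ereal" where
  "walk_weight b i [] k = b i k"
| "walk_weight b i (j # js) k = b i j + walk_weight b j js k"

text \<open>beta_ik: maximum over sequences of length l, 1 <= l <= n-1 (empty maximum = -inf = Sup {}).\<close>
definition beta :: "nat \<Rightarrow> (nat \<Rightarrow> nat \<Rightarrow> ereal) \<Rightarrow> nat \<Rightarrow> nat \<Rightarrow> ereal" where
  "beta n b i k = Sup {walk_weight b i js k | js. 1 \<le> Suc (length js) \<and> Suc (length js) \<le> n - 1 \<and> set js \<subseteq> {1..n}}"

definition bstar :: "nat \<Rightarrow> (nat \<Rightarrow> nat \<Rightarrow> ereal) \<Rightarrow> nat \<Rightarrow> nat \<Rightarrow> ereal" where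
  "bstar n b i k = (if i = k then max (beta n b i i) 0 else beta n b i k)"

definition cycle_max :: "nat \<Rightarrow> (nat \<Rightarrow> nat \<Rightarrow> ereal) \<Rightarrow> nat \<Rightarrow> nat \<Rightarrow> ereal" where
  "cycle_max n b i l = Sup {walk_weight b i js i | js. length js = l - 1 \<and> set js \<subseteq> {1..n}}"

definition objective :: "nat \<Rightarrow> nat \<Rightarrow> (nat \<Rightarrow> nat \<Rightarrow> real) \<Rightarrow> (nat \<Rightarrow> real) \<Rightarrow> (nat \<Rightarrow> real)
    \<Rightarrow> (nat \<Rightarrow> real) \<Rightarrow> real" where
  "objective n m p w h x = (MAX j\<in>{1..m}. w j * (MAX i\<in>{1..n}. \<bar>x i - p i j\<bar>) + h j)"

definition feasible :: "nat \<Rightarrow> nat \<Rightarrow> (nat \<Rightarrow> nat \<Rightarrow> real) \<Rightarrow> (nat \<Rightarrow> real) \<Rightarrow> (nat \<Rightarrow> nat \<Rightarrow> ereal)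
    \<Rightarrow> (nat \<Rightarrow> real) \<Rightarrow> (nat \<Rightarrow> real) \<Rightarrow> (nat \<Rightarrow> real) \<Rightarrow> bool" where
  "feasible n m p d b f g x \<longleftrightarrow>
     (\<forall>j\<in>{1..m}. (MAX i\<in>{1..n}. \<bar>x i - p i j\<bar>) \<le> d j) \<and>
     (\<forall>i\<in>{1..n}. \<forall>k\<in>{1..n}. b i k + ereal (x k) \<le> ereal (x i)) \<and>
     (\<forall>i\<in>{1..n}. f i \<le> x i \<and> x i \<le> g i)"

definition theta :: "nat \<Rightarrow> nat \<Rightarrow> (nat \<Rightarrow> nat \<Rightarrow> real) \<Rightarrow> (nat \<Rightarrow> real) \<Rightarrow> (nat \<Rightarrow> real) \<Rightarrow> (nat \<Rightarrow> real)
    \<Rightarrow> (nat \<Rightarrow> nat \<Rightarrow> ereal) \<Rightarrow> (nat \<Rightarrow> real) \<Rightarrow> (nat \<Rightarrow> real) \<Rightarrow> ereal" where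
  "theta n m p w d h b f g =
    (MAX i\<in>{1..n}. MAX k\<in>{1..n}. MAX j\<in>{1..m}. MAX l\<in>{1..m}.
       max (ereal (w l * h j / (w j + w l)) + ereal (w j * h l / (w j + w l))
              + ereal (w j * w l / (w j + w l)) * (bstar n b i k - ereal (p i j) + ereal (p k l)))
         (max (ereal (h j) + ereal (w j) * (bstar n b i k - ereal (p i j) + ereal (max (p k l - d l) (f k))))
              (ereal (h l) + ereal (w l) * (bstar n b i k - ereal (min (p i j + d j) (g i)) + ereal (p k l)))))"

end

theory Submission
  imports Defs
begin

text \<open>In max-plus notation, \<open>x\<close> is feasible with objective value at most \<open>t\<close> iff \<open>B \<otimes> x \<le> x\<close> and
  \<open>x\<close> lies in a box \<open>[lower_bound t, upper_bound t]\<close>. When no cycle of \<open>B\<close> has positive weight, the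
  Kleene star \<open>B\<^sup>* = bstar\<close> satisfies \<open>B \<otimes> B\<^sup>* \<le> B\<^sup>*\<close>, and \<open>B \<otimes> x \<le> x\<close> implies \<open>B\<^sup>* \<otimes> x \<le> x\<close>. Hence the
  solutions of \<open>B \<otimes> x \<le> x\<close> in a box \<open>[L, U]\<close> are exactly the vectors \<open>B\<^sup>* \<otimes> u\<close> with \<open>L \<le> u\<close> and
  \<open>B\<^sup>* \<otimes> u \<le> U\<close>, and they exist iff \<open>B\<^sup>* \<otimes> L \<le> U\<close>. For the box at level \<open>t\<close>, each inequality
  \<open>B\<^sup>*\<^sub>i\<^sub>k + L\<^sub>k \<le> U\<^sub>i\<close> splits into four inequalities for every pair \<open>j, l\<close>: the one not involving
  \<open>t\<close> is condition 2, and the other three say that the corresponding terms of \<open>\<theta>\<close> are at most \<open>t\<close>.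
  So \<open>\<theta>\<close> is the least level at which the box contains a solution, i.e. the minimum.\<close>

lemma long_list_has_repetition:
  assumes "set vs \<subseteq> {1..n}" "length vs > n"
  obtains a x c e where "vs = a @ [x] @ c @ [x] @ e"
proof -
  have "card (set vs) \<le> n" using card_mono[OF _ assms(1)] by simp
  then have "\<not> distinct vs" using assms(2) distinct_card by fastforce
  then show ?thesis using not_distinct_decomp that by blast
qed

lemma Sup_add_ereal_le:
  fixes S :: "ereal set"
  assumes "\<And>s. s \<in> S \<Longrightarrow> s + ereal c \<le> e"
  shows "Sup S + ereal c \<le> e"
proof -
  have "Sup S \<le> e - ereal c" by (rule Sup_least) (use assms in \<open>simp add: ereal_le_minus\<close>)
  then show ?thesis by (simp add: ereal_le_minus)
qed

lemma ereal_le_real_minus_iff: "ereal v \<le> ereal a - y \<longleftrightarrow> y + ereal v \<le> ereal a"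
  by (cases y) auto

lemma Max_image_neq:
  assumes "finite A" "A \<noteq> {}" "\<And>a. a \<in> A \<Longrightarrow> F a \<noteq> c"
  shows "Max (F ` A) \<noteq> c"
proof -
  have "Max (F ` A) \<in> F ` A" using assms(1,2) by simp
  then show ?thesis using assms(3) by force
qed

lemma add_Max_le_Min_iff:
  fixes c :: "'a::linordered_ab_group_add"
  assumes "finite A" "A \<noteq> {}" "finite B" "B \<noteq> {}"
  shows "c + Max A \<le> Min B \<longleftrightarrow> (\<forall>a\<in>A. \<forall>b\<in>B. c + a \<le> b)"
proof -
  have "c + Max A \<le> Min B \<longleftrightarrow> Max A \<le> Min B - c" by (simp add: le_diff_eq add.commute)
  also have "\<dots> \<longleftrightarrow> (\<forall>a\<in>A. a \<le> Min B - c)" using assms(1,2) by (rule Max_le_iff)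
  also have "\<dots> \<longleftrightarrow> (\<forall>a\<in>A. \<forall>b\<in>B. a + c \<le> b)" using assms(3,4) by (simp add: le_diff_eq)
  finally show ?thesis by (simp add: add.commute)
qed

fun path_weight :: "(nat \<Rightarrow> nat \<Rightarrow> ereal) \<Rightarrow> nat list \<Rightarrow> ereal" where
  "path_weight b [] = 0"
| "path_weight b [v] = 0"
| "path_weight b (u # v # vs) = b u v + path_weight b (v # vs)"

lemma walk_weight_eq_path_weight: "walk_weight b i js k = path_weight b (i # js @ [k])"
  by (induction js arbitrary: i) auto

lemma path_weight_append:
  "path_weight b (xs @ [x] @ ys) = path_weight b (xs @ [x]) + path_weight b (x # ys)"
proof (induction xs)
  case (Cons a xs)
  then show ?case by (cases xs) (auto simp: add.assoc)
qed simp

lemma path_weight_remove_cycle_le: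
  assumes "path_weight b (x # c @ [x]) \<le> 0"
  shows "path_weight b (a @ [x] @ c @ [x] @ e) \<le> path_weight b (a @ [x] @ e)"
proof -
  have "path_weight b (a @ [x] @ c @ [x] @ e)
      = path_weight b (a @ [x]) + (path_weight b (x # c @ [x]) + path_weight b (x # e))"
    using path_weight_append[of b a x "c @ [x] @ e"] path_weight_append[of b "x # c" x e] by simp
  also have "\<dots> \<le> path_weight b (a @ [x]) + (0 + path_weight b (x # e))"
    using assms by (intro add_left_mono add_right_mono)
  also have "\<dots> = path_weight b (a @ [x] @ e)"
    using path_weight_append[of b a x e] by simp
  finally show ?thesis .
qed

definition subeigenvector :: "nat \<Rightarrow> (nat \<Rightarrow> nat \<Rightarrow> ereal) \<Rightarrow> (nat \<Rightarrow> real) \<Rightarrow> bool" where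
  "subeigenvector n b x \<longleftrightarrow> (\<forall>i\<in>{1..n}. \<forall>k\<in>{1..n}. b i k + ereal (x k) \<le> ereal (x i))"

definition maxplus_mult_vec :: "nat \<Rightarrow> (nat \<Rightarrow> nat \<Rightarrow> ereal) \<Rightarrow> (nat \<Rightarrow> real) \<Rightarrow> nat \<Rightarrow> ereal" where
  "maxplus_mult_vec n S u i = (MAX k\<in>{1..n}. S i k + ereal (u k))"

lemma path_weight_add_le_of_subeigenvector:
  assumes "subeigenvector n b x"
  shows "set vs \<subseteq> {1..n} \<Longrightarrow> vs \<noteq> [] \<Longrightarrow>
    path_weight b vs + ereal (x (last vs)) \<le> ereal (x (hd vs))"
proof (induction vs rule: induct_list012)
  case (3 u v vs)
  have "path_weight b (u # v # vs) + ereal (x (last (u # v # vs)))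
      = b u v + (path_weight b (v # vs) + ereal (x (last (v # vs))))"
    by (simp add: add.assoc)
  also have "\<dots> \<le> b u v + ereal (x v)"
    using "3" by (intro add_left_mono) auto
  also have "\<dots> \<le> ereal (x u)"
    using assms "3.prems" unfolding subeigenvector_def by auto
  finally show ?case by simp
qed simp_all

lemma bstar_diag_nonneg: "0 \<le> bstar n b i i"
  unfolding bstar_def by simp

lemma bstar_add_le_of_subeigenvector:
  assumes x: "subeigenvector n b x" and "i \<in> {1..n}" "k \<in> {1..n}"
  shows "bstar n b i k + ereal (x k) \<le> ereal (x i)"
proof -
  have "beta n b i k + ereal (x k) \<le> ereal (x i)"
    unfolding beta_def
  proof (rule Sup_add_ereal_le, clarify)
    fix js assume "set js \<subseteq> {1..n}"
    then show "walk_weight b i js k + ereal (x k) \<le> ereal (x i)"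
      using path_weight_add_le_of_subeigenvector[OF x, of "i # js @ [k]"] assms(2,3)
      by (simp add: walk_weight_eq_path_weight)
  qed
  then show ?thesis unfolding bstar_def by (auto simp: max_def)
qed

lemma le_maxplus_mult_vec:
  assumes "0 \<le> S i i" "i \<in> {1..n}"
  shows "ereal (u i) \<le> maxplus_mult_vec n S u i"
proof -
  have "ereal (u i) \<le> S i i + ereal (u i)" using add_right_mono[OF assms(1)] by simp
  then show ?thesis unfolding maxplus_mult_vec_def using assms(2) by (auto simp: Max_ge_iff)
qed

lemma subeigenvector_eq_maxplus_mult_vec:
  assumes "subeigenvector n b x" "i \<in> {1..n}"
  shows "ereal (x i) = maxplus_mult_vec n (bstar n b) x i"
proof (rule antisym)
  show "ereal (x i) \<le> maxplus_mult_vec n (bstar n b) x i"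
    using bstar_diag_nonneg assms(2) by (rule le_maxplus_mult_vec)
  show "maxplus_mult_vec n (bstar n b) x i \<le> ereal (x i)"
    unfolding maxplus_mult_vec_def using bstar_add_le_of_subeigenvector[OF assms(1)] assms(2) by auto
qed

context
  fixes n :: nat and b :: "nat \<Rightarrow> nat \<Rightarrow> ereal"
  assumes cycles_nonpos: "\<forall>i\<in>{1..n}. \<forall>l\<in>{1..n}. cycle_max n b i l \<le> 0"
begin

lemma closed_path_weight_nonpos:
  "set vs \<subseteq> {1..n} \<Longrightarrow> vs \<noteq> [] \<Longrightarrow> hd vs = last vs \<Longrightarrow> path_weight b vs \<le> 0"
proof (induction vs rule: length_induct)
  case (1 vs)
  show ?case
  proof (cases "length vs \<le> n + 1")
    case short: True
    show ?thesis
    proof (cases "length vs = 1")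
      case True
      then obtain v where "vs = [v]" by (cases vs) auto
      then show ?thesis by simp
    next
      case False
      with "1.prems" obtain v js where vs: "vs = v # js @ [v]"
        by (cases vs rule: rev_cases) (auto simp: neq_Nil_conv)
      have v: "v \<in> {1..n}" and len: "length vs - 1 \<in> {1..n}"
        using "1.prems" short vs by auto
      have "path_weight b vs = walk_weight b v js v"
        using vs by (simp add: walk_weight_eq_path_weight)
      also have "\<dots> \<le> cycle_max n b v (length vs - 1)"
        unfolding cycle_max_def by (rule Sup_upper) (use vs "1.prems" in auto)
      also have "\<dots> \<le> 0" using cycles_nonpos v len by auto
      finally show ?thesis .
    qed
  next
    case False
    with "1.prems" obtain v ws where vs: "vs = v # ws" and "length ws > n"
      by (cases vs) auto
    moreover have "set ws \<subseteq> {1..n}" using "1.prems" vs by auto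
    ultimately obtain a x c e where ws: "ws = a @ [x] @ c @ [x] @ e"
      using long_list_has_repetition by blast
    have "path_weight b ((v # a) @ [x] @ c @ [x] @ e) \<le> path_weight b ((v # a) @ [x] @ e)"
      by (rule path_weight_remove_cycle_le) (use "1" vs ws in auto)
    also have "\<dots> \<le> 0"
      using "1.IH"[rule_format, of "(v # a) @ [x] @ e"] "1.prems" vs ws by (cases e) auto
    finally show ?thesis using vs ws by simp
  qed
qed

lemma path_weight_le_bstar:
  "set vs \<subseteq> {1..n} \<Longrightarrow> vs \<noteq> [] \<Longrightarrow> path_weight b vs \<le> bstar n b (hd vs) (last vs)"
proof (induction vs rule: length_induct)
  case (1 vs)
  show ?case
  proof (cases "length vs \<le> n")
    case short: True
    show ?thesis
    proof (cases "length vs = 1")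
      case True
      then obtain v where "vs = [v]" by (cases vs) auto
      then show ?thesis by (simp add: bstar_diag_nonneg)
    next
      case False
      with "1.prems" obtain v js k where vs: "vs = v # js @ [k]"
        by (cases vs rule: rev_cases) (auto simp: neq_Nil_conv)
      have "path_weight b vs = walk_weight b v js k"
        using vs by (simp add: walk_weight_eq_path_weight)
      also have "\<dots> \<le> beta n b v k"
        unfolding beta_def by (rule Sup_upper) (use vs "1.prems" short in auto)
      also have "\<dots> \<le> bstar n b (hd vs) (last vs)" using vs by (simp add: bstar_def)
      finally show ?thesis .
    qed
  next
    case False
    then obtain a x c e where vs: "vs = a @ [x] @ c @ [x] @ e"
      using long_list_has_repetition "1.prems" by (meson not_le)
    have "path_weight b vs \<le> path_weight b (a @ [x] @ e)"
      unfolding vs by (rule path_weight_remove_cycle_le, rule closed_path_weight_nonpos)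
        (use "1.prems" vs in auto)
    also have "\<dots> \<le> bstar n b (hd vs) (last vs)"
      using "1.IH"[rule_format, of "a @ [x] @ e"] "1.prems" vs by (cases e; cases a) auto
    finally show ?thesis .
  qed
qed

lemma b_add_bstar_le_bstar:
  assumes "i \<in> {1..n}" "k \<in> {1..n}" "l \<in> {1..n}"
    and "b i k \<noteq> \<infinity>" "bstar n b k l \<noteq> \<infinity>"
  shows "b i k + bstar n b k l \<le> bstar n b i l"
proof (cases "b i k")
  case MInf
  then show ?thesis using assms(5) by (cases "bstar n b k l") auto
next
  case PInf
  then show ?thesis using assms(4) by simp
next
  case (real r)
  have "beta n b k l + ereal r \<le> bstar n b i l"
    unfolding beta_def
  proof (rule Sup_add_ereal_le, clarify)
    fix js assume "set js \<subseteq> {1..n}"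
    then show "walk_weight b k js l + ereal r \<le> bstar n b i l"
      using path_weight_le_bstar[of "i # k # js @ [l]"] assms(1-3) real
      by (simp add: walk_weight_eq_path_weight add.commute)
  qed
  moreover have "b i l \<le> bstar n b i l"
    using path_weight_le_bstar[of "[i, l]"] assms by simp
  ultimately show ?thesis
    unfolding bstar_def[of n b k l] using real by (auto simp: max_def add.commute)
qed

context
  assumes b_finite: "\<forall>i\<in>{1..n}. \<forall>k\<in>{1..n}. b i k \<noteq> \<infinity>"
    and bstar_finite: "\<forall>i\<in>{1..n}. \<forall>k\<in>{1..n}. bstar n b i k \<noteq> \<infinity>"
begin

lemma subeigenvector_maxplus_mult_vec_bstar:
  assumes x: "\<forall>i\<in>{1..n}. ereal (x i) = maxplus_mult_vec n (bstar n b) u i"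
  shows "subeigenvector n b x"
  unfolding subeigenvector_def
proof (intro ballI)
  fix i k assume i: "i \<in> {1..n}" and k: "k \<in> {1..n}"
  obtain l where l: "l \<in> {1..n}" and xk: "ereal (x k) = bstar n b k l + ereal (u l)"
    using x k Max_in[of "(\<lambda>l. bstar n b k l + ereal (u l)) ` {1..n}"]
    unfolding maxplus_mult_vec_def by fastforce
  have "b i k + ereal (x k) = (b i k + bstar n b k l) + ereal (u l)"
    using xk by (simp add: add.assoc)
  also have "\<dots> \<le> bstar n b i l + ereal (u l)"
    using b_add_bstar_le_bstar[OF i k l] b_finite bstar_finite i k l by (intro add_right_mono) auto
  also have "\<dots> \<le> ereal (x i)"
    using x i l unfolding maxplus_mult_vec_def by (simp add: Max_ge_iff)
  finally show "b i k + ereal (x k) \<le> ereal (x i)" .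
qed

lemma subeigenvector_in_box_iff:
  "subeigenvector n b x \<and> (\<forall>k\<in>{1..n}. L k \<le> x k \<and> x k \<le> U k) \<longleftrightarrow>
    (\<exists>u. (\<forall>k\<in>{1..n}. L k \<le> u k \<and> (\<forall>i\<in>{1..n}. bstar n b i k + ereal (u k) \<le> ereal (U i)))
       \<and> (\<forall>i\<in>{1..n}. ereal (x i) = maxplus_mult_vec n (bstar n b) u i))"
proof
  assume x: "subeigenvector n b x \<and> (\<forall>k\<in>{1..n}. L k \<le> x k \<and> x k \<le> U k)"
  have "bstar n b i k + ereal (x k) \<le> ereal (U i)" if "i \<in> {1..n}" "k \<in> {1..n}" for i k
    using bstar_add_le_of_subeigenvector[of n b x i k] x that by (auto intro: order_trans)
  then show "\<exists>u. (\<forall>k\<in>{1..n}. L k \<le> u k \<and> (\<forall>i\<in>{1..n}. bstar n b i k + ereal (u k) \<le> ereal (U i)))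
       \<and> (\<forall>i\<in>{1..n}. ereal (x i) = maxplus_mult_vec n (bstar n b) u i)"
    using x subeigenvector_eq_maxplus_mult_vec by blast
next
  assume "\<exists>u. (\<forall>k\<in>{1..n}. L k \<le> u k \<and> (\<forall>i\<in>{1..n}. bstar n b i k + ereal (u k) \<le> ereal (U i)))
       \<and> (\<forall>i\<in>{1..n}. ereal (x i) = maxplus_mult_vec n (bstar n b) u i)"
  then obtain u where u: "\<forall>k\<in>{1..n}. L k \<le> u k \<and> (\<forall>i\<in>{1..n}. bstar n b i k + ereal (u k) \<le> ereal (U i))"
    and x: "\<forall>i\<in>{1..n}. ereal (x i) = maxplus_mult_vec n (bstar n b) u i" by blast
  have "L k \<le> x k \<and> x k \<le> U k" if k: "k \<in> {1..n}" for k
  proof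
    have "ereal (u k) \<le> ereal (x k)"
      using le_maxplus_mult_vec[of "bstar n b" k, OF bstar_diag_nonneg k] x k by simp
    then show "L k \<le> x k" using u k by force
    have "ereal (x k) \<le> ereal (U k)"
      using x u k unfolding maxplus_mult_vec_def by (simp add: Max_le_iff)
    then show "x k \<le> U k" by simp
  qed
  then show "subeigenvector n b x \<and> (\<forall>k\<in>{1..n}. L k \<le> x k \<and> x k \<le> U k)"
    using subeigenvector_maxplus_mult_vec_bstar[OF x] by blast
qed

lemma exists_subeigenvector_in_box_iff:
  "(\<exists>x. subeigenvector n b x \<and> (\<forall>k\<in>{1..n}. L k \<le> x k \<and> x k \<le> U k)) \<longleftrightarrow>
    (\<forall>i\<in>{1..n}. \<forall>k\<in>{1..n}. bstar n b i k + ereal (L k) \<le> ereal (U i))"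
proof
  assume "\<exists>x. subeigenvector n b x \<and> (\<forall>k\<in>{1..n}. L k \<le> x k \<and> x k \<le> U k)"
  then obtain x where x: "subeigenvector n b x" and box: "\<forall>k\<in>{1..n}. L k \<le> x k \<and> x k \<le> U k"
    by blast
  show "\<forall>i\<in>{1..n}. \<forall>k\<in>{1..n}. bstar n b i k + ereal (L k) \<le> ereal (U i)"
  proof (intro ballI)
    fix i k assume i: "i \<in> {1..n}" and k: "k \<in> {1..n}"
    have "bstar n b i k + ereal (L k) \<le> bstar n b i k + ereal (x k)"
      using box k by (intro add_left_mono) simp
    also have "\<dots> \<le> ereal (x i)" using bstar_add_le_of_subeigenvector[OF x i k] .
    also have "\<dots> \<le> ereal (U i)" using box i by simp
    finally show "bstar n b i k + ereal (L k) \<le> ereal (U i)" .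
  qed
next
  assume LU: "\<forall>i\<in>{1..n}. \<forall>k\<in>{1..n}. bstar n b i k + ereal (L k) \<le> ereal (U i)"
  define x where "x i = real_of_ereal (maxplus_mult_vec n (bstar n b) L i)" for i
  have "ereal (x i) = maxplus_mult_vec n (bstar n b) L i" if i: "i \<in> {1..n}" for i
  proof -
    have "ereal (L i) \<le> maxplus_mult_vec n (bstar n b) L i"
      using bstar_diag_nonneg i by (rule le_maxplus_mult_vec)
    moreover have "maxplus_mult_vec n (bstar n b) L i \<le> ereal (U i)"
      using LU i unfolding maxplus_mult_vec_def by fastforce
    ultimately show ?thesis unfolding x_def by (cases "maxplus_mult_vec n (bstar n b) L i") auto
  qed
  then show "\<exists>x. subeigenvector n b x \<and> (\<forall>k\<in>{1..n}. L k \<le> x k \<and> x k \<le> U k)"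
    using subeigenvector_in_box_iff LU by blast
qed

end

end

lemma weighted_term_le_iff:
  fixes wj wl :: real assumes "wj > 0" "wl > 0"
  shows "wl*hj/(wj+wl) + wj*hl/(wj+wl) + wj*wl/(wj+wl)*(\<beta> - pij + pkl) \<le> t
    \<longleftrightarrow> \<beta> + (pkl - (t-hl)/wl) \<le> pij + (t-hj)/wj"
proof -
  have "wl*hj/(wj+wl) + wj*hl/(wj+wl) + wj*wl/(wj+wl)*(\<beta> - pij + pkl)
      = (wl*hj + wj*hl + wj*wl*(\<beta> - pij + pkl)) / (wj+wl)"
    by (simp add: add_divide_distrib)
  also have "\<dots> \<le> t \<longleftrightarrow> wj*wl*(\<beta> - pij + pkl) \<le> wj*(t - hl) + wl*(t - hj)"
    using assms by (simp add: pos_divide_le_eq algebra_simps)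
  also have "\<dots> \<longleftrightarrow> \<beta> + (pkl - (t-hl)/wl) \<le> pij + (t-hj)/wj"
    using assms by (simp add: field_simps)
  finally show ?thesis .
qed

lemma add_mult_le_iff_le_divide:
  fixes w :: real assumes "w > 0"
  shows "h + w * c \<le> t \<longleftrightarrow> c \<le> (t - h) / w"
  using assms by (simp add: field_simps)

lemma max_theta_terms_le_iff:
  fixes wj wl :: real
  assumes "wj > 0" "wl > 0" and "\<beta> + M \<le> N"
  shows "max (wl*hj/(wj+wl) + wj*hl/(wj+wl) + wj*wl/(wj+wl)*(\<beta> - pij + pkl))
           (max (hj + wj*(\<beta> - pij + M)) (hl + wl*(\<beta> - N + pkl))) \<le> t
    \<longleftrightarrow> \<beta> + max (pkl - (t - hl)/wl) M \<le> min (pij + (t - hj)/wj) N"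
proof -
  have "max (wl*hj/(wj+wl) + wj*hl/(wj+wl) + wj*wl/(wj+wl)*(\<beta> - pij + pkl))
           (max (hj + wj*(\<beta> - pij + M)) (hl + wl*(\<beta> - N + pkl))) \<le> t
    \<longleftrightarrow> \<beta> + (pkl - (t-hl)/wl) \<le> pij + (t-hj)/wj \<and> \<beta> - pij + M \<le> (t - hj)/wj
        \<and> \<beta> - N + pkl \<le> (t - hl)/wl"
    using weighted_term_le_iff add_mult_le_iff_le_divide assms(1,2) by simp
  also have "\<dots> \<longleftrightarrow> \<beta> + max (pkl - (t - hl)/wl) M \<le> min (pij + (t - hj)/wj) N"
    unfolding max_add_distrib_right max.bounded_iff min.bounded_iff using assms(3) by linarith
  finally show ?thesis .
qed

locale minimax_location =
  fixes n m :: nat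
    and p :: "nat \<Rightarrow> nat \<Rightarrow> real"
    and w d h f g :: "nat \<Rightarrow> real"
    and b :: "nat \<Rightarrow> nat \<Rightarrow> ereal"
  assumes n_pos: "n \<ge> 1" and m_pos: "m \<ge> 1"
    and weights_pos: "\<forall>j\<in>{1..m}. w j > 0"
    and b_finite: "\<forall>i\<in>{1..n}. \<forall>k\<in>{1..n}. b i k \<noteq> \<infinity>"
    and cycles_nonpos: "\<forall>i\<in>{1..n}. \<forall>l\<in>{1..n}. cycle_max n b i l \<le> 0"
    and bstar_box: "\<forall>i\<in>{1..n}. \<forall>k\<in>{1..n}.
        bstar n b i k + ereal (max (MAX l\<in>{1..m}. p k l - d l) (f k))
          \<le> ereal (min (MIN j\<in>{1..m}. p i j + d j) (g i))"
begin

lemma bstar_finite: "\<forall>i\<in>{1..n}. \<forall>k\<in>{1..n}. bstar n b i k \<noteq> \<infinity>"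
  using bstar_box by fastforce

definition lower_bound :: "real \<Rightarrow> nat \<Rightarrow> real" where
  "lower_bound t k = (MAX j\<in>{1..m}. max (p k j - (t - h j) / w j) (max (p k j - d j) (f k)))"

definition upper_bound :: "real \<Rightarrow> nat \<Rightarrow> real" where
  "upper_bound t i = (MIN j\<in>{1..m}. min (p i j + (t - h j) / w j) (min (p i j + d j) (g i)))"

lemma objective_le_iff:
  "objective n m p w h x \<le> t \<longleftrightarrow> (\<forall>k\<in>{1..n}. \<forall>j\<in>{1..m}. \<bar>x k - p k j\<bar> \<le> (t - h j) / w j)"
proof -
  have "w j * (MAX i\<in>{1..n}. \<bar>x i - p i j\<bar>) + h j \<le> t
      \<longleftrightarrow> (\<forall>k\<in>{1..n}. \<bar>x k - p k j\<bar> \<le> (t - h j) / w j)" if "j \<in> {1..m}" for j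
    using add_mult_le_iff_le_divide[of "w j" "h j" _ t] weights_pos that n_pos by (simp add: add.commute)
  then show ?thesis unfolding objective_def using m_pos by auto
qed

lemma between_bounds_iff:
  "lower_bound t k \<le> x k \<and> x k \<le> upper_bound t k \<longleftrightarrow>
    (\<forall>j\<in>{1..m}. \<bar>x k - p k j\<bar> \<le> (t - h j) / w j \<and> \<bar>x k - p k j\<bar> \<le> d j) \<and> f k \<le> x k \<and> x k \<le> g k"
  unfolding lower_bound_def upper_bound_def using m_pos by (auto simp: abs_le_iff)

lemma feasible_objective_le_iff:
  "feasible n m p d b f g x \<and> objective n m p w h x \<le> t \<longleftrightarrow>
    subeigenvector n b x \<and> (\<forall>k\<in>{1..n}. lower_bound t k \<le> x k \<and> x k \<le> upper_bound t k)"
  unfolding feasible_def subeigenvector_def objective_le_iff between_bounds_iff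
  using n_pos by auto

definition theta_term :: "nat \<Rightarrow> nat \<Rightarrow> nat \<Rightarrow> nat \<Rightarrow> ereal" where
  "theta_term i k j l =
       max (ereal (w l * h j / (w j + w l)) + ereal (w j * h l / (w j + w l))
              + ereal (w j * w l / (w j + w l)) * (bstar n b i k - ereal (p i j) + ereal (p k l)))
         (max (ereal (h j) + ereal (w j) * (bstar n b i k - ereal (p i j) + ereal (max (p k l - d l) (f k))))
              (ereal (h l) + ereal (w l) * (bstar n b i k - ereal (min (p i j + d j) (g i)) + ereal (p k l))))"

lemma theta_eq_Max_theta_term:
  "theta n m p w d h b f g = (MAX i\<in>{1..n}. MAX k\<in>{1..n}. MAX j\<in>{1..m}. MAX l\<in>{1..m}. theta_term i k j l)"
  unfolding theta_def theta_term_def ..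

lemma theta_term_MInfty:
  assumes "bstar n b i k = -\<infinity>" "j \<in> {1..m}" "l \<in> {1..m}"
  shows "theta_term i k j l = -\<infinity>"
proof -
  have "w j > 0" "w l > 0" using weights_pos assms by auto
  moreover have "ereal c + ereal a * (-\<infinity> + ereal x) = -\<infinity>"
    and "ereal c + ereal a * (-\<infinity> - ereal y + ereal x) = -\<infinity>" if "a > 0" for a c x y
    using that by simp_all
  ultimately show ?thesis unfolding theta_term_def assms(1) by (simp only:) simp
qed

lemma theta_term_real:
  assumes "bstar n b i k = ereal \<beta>"
  shows "theta_term i k j l = ereal (max
      (w l * h j / (w j + w l) + w j * h l / (w j + w l) + w j * w l / (w j + w l) * (\<beta> - p i j + p k l))
      (max (h j + w j * (\<beta> - p i j + max (p k l - d l) (f k)))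
           (h l + w l * (\<beta> - min (p i j + d j) (g i) + p k l))))"
  unfolding theta_term_def assms
  by (simp del: ereal_max ereal_min add: ereal_max[symmetric] ereal_min[symmetric])

lemma theta_term_le_iff:
  assumes i: "i \<in> {1..n}" and k: "k \<in> {1..n}"
  shows "(\<forall>j\<in>{1..m}. \<forall>l\<in>{1..m}. theta_term i k j l \<le> ereal t)
    \<longleftrightarrow> bstar n b i k + ereal (lower_bound t k) \<le> ereal (upper_bound t i)"
proof (cases "bstar n b i k")
  case PInf
  then show ?thesis using bstar_finite i k by simp
next
  case MInf
  then show ?thesis using theta_term_MInfty by simp
next
  case (real \<beta>)
  have bstar_box_real: "\<beta> + max (p k l - d l) (f k) \<le> min (p i j + d j) (g i)"
    if "j \<in> {1..m}" "l \<in> {1..m}" for j l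
  proof -
    have "bstar n b i k + ereal (max (MAX l\<in>{1..m}. p k l - d l) (f k))
        \<le> ereal (min (MIN j\<in>{1..m}. p i j + d j) (g i))"
      using bstar_box i k by blast
    then have "\<beta> + max (MAX l\<in>{1..m}. p k l - d l) (f k) \<le> min (MIN j\<in>{1..m}. p i j + d j) (g i)"
      unfolding real by (simp only: plus_ereal.simps(1) ereal_less_eq(3))
    moreover have "p k l - d l \<le> (MAX l\<in>{1..m}. p k l - d l)" "(MIN j\<in>{1..m}. p i j + d j) \<le> p i j + d j"
      using that by auto
    ultimately show ?thesis by linarith
  qed
  have "theta_term i k j l \<le> ereal t \<longleftrightarrow>
      \<beta> + max (p k l - (t - h l) / w l) (max (p k l - d l) (f k))
        \<le> min (p i j + (t - h j) / w j) (min (p i j + d j) (g i))"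
    if j: "j \<in> {1..m}" and l: "l \<in> {1..m}" for j l
  proof -
    have "w j > 0" "w l > 0" using weights_pos j l by auto
    then show ?thesis
      unfolding theta_term_real[OF real] ereal_less_eq
      by (rule max_theta_terms_le_iff) (rule bstar_box_real[OF j l])
  qed
  moreover have "bstar n b i k + ereal (lower_bound t k) \<le> ereal (upper_bound t i) \<longleftrightarrow>
      (\<forall>l\<in>{1..m}. \<forall>j\<in>{1..m}. \<beta> + max (p k l - (t - h l) / w l) (max (p k l - d l) (f k))
        \<le> min (p i j + (t - h j) / w j) (min (p i j + d j) (g i)))"
    unfolding real plus_ereal.simps(1) ereal_less_eq(3) lower_bound_def upper_bound_def
    using m_pos by (subst add_Max_le_Min_iff) auto
  ultimately show ?thesis by auto
qed

lemma theta_le_iff: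
  "theta n m p w d h b f g \<le> ereal t
    \<longleftrightarrow> (\<forall>i\<in>{1..n}. \<forall>k\<in>{1..n}. bstar n b i k + ereal (lower_bound t k) \<le> ereal (upper_bound t i))"
  unfolding theta_eq_Max_theta_term using n_pos m_pos theta_term_le_iff by simp

lemma theta_finite:
  obtains t where "theta n m p w d h b f g = ereal t"
proof -
  have "theta_term i k j l \<noteq> \<infinity>" if "i \<in> {1..n}" "k \<in> {1..n}" "j \<in> {1..m}" "l \<in> {1..m}" for i k j l
    using bstar_finite that
    by (cases "bstar n b i k") (simp_all add: theta_term_real theta_term_MInfty del: ereal_max)
  then have not_PInf: "theta n m p w d h b f g \<noteq> \<infinity>"
    unfolding theta_eq_Max_theta_term using n_pos m_pos by (intro Max_image_neq ballI) auto
  obtain \<beta> where "bstar n b 1 1 = ereal \<beta>"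
    using bstar_finite bstar_diag_nonneg[of n b 1] n_pos by (cases "bstar n b 1 1") auto
  then have "theta_term 1 1 1 1 \<noteq> -\<infinity>"
    by (simp add: theta_term_real del: ereal_max)
  moreover have "theta_term 1 1 1 1 \<le> theta n m p w d h b f g"
    unfolding theta_eq_Max_theta_term using n_pos m_pos by (force simp: Max_ge_iff)
  ultimately have "theta n m p w d h b f g \<noteq> -\<infinity>" by auto
  with not_PInf show ?thesis using that by (cases "theta n m p w d h b f g") auto
qed

lemma theta_le_objective:
  assumes "feasible n m p d b f g x"
  shows "theta n m p w d h b f g \<le> ereal (objective n m p w h x)"
proof -
  define t where "t = objective n m p w h x"
  have "\<exists>x. subeigenvector n b x \<and> (\<forall>k\<in>{1..n}. lower_bound t k \<le> x k \<and> x k \<le> upper_bound t k)"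
    using feasible_objective_le_iff[of x t] assms t_def by auto
  then show ?thesis
    unfolding t_def[symmetric] theta_le_iff
    using exists_subeigenvector_in_box_iff[OF cycles_nonpos b_finite bstar_finite] by blast
qed

lemma lower_bound_iff:
  "(MAX j\<in>{1..m}. max ((ereal (h j) - ereal t) / ereal (w j) + ereal (p k j))
                       (ereal (max (p k j - d j) (f k)))) \<le> ereal v
   \<longleftrightarrow> lower_bound t k \<le> v"
proof -
  have "(ereal (h j) - ereal t) / ereal (w j) + ereal (p k j) = ereal (p k j - (t - h j) / w j)"
    if "j \<in> {1..m}" for j
  proof -
    have "w j > 0" using weights_pos that by blast
    then show ?thesis by (simp add: field_simps)
  qed
  then show ?thesis
    unfolding lower_bound_def using m_pos by (simp del: ereal_max add: ereal_max[symmetric])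
qed

lemma upper_bound_iff:
  "ereal v \<le> (MIN i\<in>{1..n}. MIN j\<in>{1..m}.
      min ((ereal t - ereal (h j)) / ereal (w j) + ereal (p i j)) (ereal (min (p i j + d j) (g i)))
        - bstar n b i k)
    \<longleftrightarrow> (\<forall>i\<in>{1..n}. bstar n b i k + ereal v \<le> ereal (upper_bound t i))"
proof -
  have "(ereal t - ereal (h j)) / ereal (w j) + ereal (p i j) = ereal (p i j + (t - h j) / w j)"
    if "j \<in> {1..m}" for i j
  proof -
    have "w j > 0" using weights_pos that by blast
    then show ?thesis by (simp add: field_simps)
  qed
  then have "ereal v \<le> (MIN i\<in>{1..n}. MIN j\<in>{1..m}.
            min ((ereal t - ereal (h j)) / ereal (w j) + ereal (p i j)) (ereal (min (p i j + d j) (g i)))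
              - bstar n b i k)
    \<longleftrightarrow> (\<forall>i\<in>{1..n}. \<forall>j\<in>{1..m}.
          ereal v \<le> ereal (min (p i j + (t - h j) / w j) (min (p i j + d j) (g i))) - bstar n b i k)"
    using n_pos m_pos by (simp del: ereal_min add: ereal_min[symmetric])
  also have "\<dots> \<longleftrightarrow> (\<forall>i\<in>{1..n}. \<forall>j\<in>{1..m}.
          bstar n b i k + ereal v \<le> ereal (min (p i j + (t - h j) / w j) (min (p i j + d j) (g i))))"
    by (simp only: ereal_le_real_minus_iff)
  also have "\<dots> \<longleftrightarrow> (\<forall>i\<in>{1..n}. bstar n b i k + ereal v \<le> ereal (upper_bound t i))"
    unfolding upper_bound_def using m_pos
    by (simp add: mono_Min_commute[of ereal] mono_def image_image del: ereal_min)
  finally show ?thesis .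
qed

end

theorem corollary1:
  fixes n m :: nat
    and p :: "nat \<Rightarrow> nat \<Rightarrow> real"
    and w d h f g :: "nat \<Rightarrow> real"
    and b :: "nat \<Rightarrow> nat \<Rightarrow> ereal"
  assumes "n \<ge> 1" and "m \<ge> 1"
    and "\<forall>j\<in>{1..m}. w j > 0 \<and> d j > 0"
    and "\<forall>i\<in>{1..n}. \<forall>k\<in>{1..n}. b i k \<noteq> \<infinity>"
    and "\<forall>i\<in>{1..n}. f i \<le> g i"
    and cond1: "\<forall>i\<in>{1..n}. \<forall>l\<in>{1..n}. cycle_max n b i l \<le> 0"
    and cond2: "\<forall>i\<in>{1..n}. \<forall>k\<in>{1..n}.
        bstar n b i k + ereal (max (MAX l\<in>{1..m}. p k l - d l) (f k))
          \<le> ereal (min (MIN j\<in>{1..m}. p i j + d j) (g i))"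
  shows "(\<exists>x. feasible n m p d b f g x \<and> ereal (objective n m p w h x) = theta n m p w d h b f g)
    \<and> (\<forall>x. feasible n m p d b f g x \<longrightarrow> theta n m p w d h b f g \<le> ereal (objective n m p w h x))
    \<and> (\<forall>x. (feasible n m p d b f g x \<and> ereal (objective n m p w h x) = theta n m p w d h b f g)
         \<longleftrightarrow> (\<exists>u :: nat \<Rightarrow> real.
               (\<forall>k\<in>{1..n}.
                  (MAX j\<in>{1..m}. max ((ereal (h j) - theta n m p w d h b f g) / ereal (w j) + ereal (p k j))
                                      (ereal (max (p k j - d j) (f k))))
                  \<le> ereal (u k)
                \<and> ereal (u k) \<le>
                  (MIN i\<in>{1..n}. MIN j\<in>{1..m}.
                     min ((theta n m p w d h b f g - ereal (h j)) / ereal (w j) + ereal (p i j))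
                         (ereal (min (p i j + d j) (g i))) - bstar n b i k))
             \<and> (\<forall>i\<in>{1..n}. ereal (x i) = (MAX k\<in>{1..n}. bstar n b i k + ereal (u k)))))"
proof -
  interpret minimax_location n m p w d h f g b
    using assms by unfold_locales auto
  obtain t where t: "theta n m p w d h b f g = ereal t" by (rule theta_finite)
  have optimal_iff: "feasible n m p d b f g x \<and> ereal (objective n m p w h x) = ereal t
      \<longleftrightarrow> subeigenvector n b x \<and> (\<forall>k\<in>{1..n}. lower_bound t k \<le> x k \<and> x k \<le> upper_bound t k)" for x
    using theta_le_objective[of x] feasible_objective_le_iff[of x t] unfolding t by auto
  have "\<exists>x. subeigenvector n b x \<and> (\<forall>k\<in>{1..n}. lower_bound t k \<le> x k \<and> x k \<le> upper_bound t k)"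
    using exists_subeigenvector_in_box_iff[OF cycles_nonpos b_finite bstar_finite] theta_le_iff[of t] t
    by simp
  then show ?thesis
    unfolding t lower_bound_iff upper_bound_iff optimal_iff
    using theta_le_objective[unfolded t]
      subeigenvector_in_box_iff[OF cycles_nonpos b_finite bstar_finite, unfolded maxplus_mult_vec_def]
    by blast
qed

end
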